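(* Let $\Gamma$ be a graph. An element $a\in H_1(\Gamma;\mathbb{Z}/2\mathbb{Z})$ is a tile of the homological additive poset of $\Gamma$ if and only if its support $\Gamma_a$ is a geometric tile.
   Context: A graph is a 1-dimensional CW-complex (vertices and edges). Each element $a$ of $H=H_1(\Gamma;\mathbb{Z}/2\mathbb{Z})$ is represented by a unique 1-cycle (finite set of edges with every vertex incident to an even number of them, with multiplicity); ordering by inclusion of 1-cycles gives the homological additive poset of $\Gamma$. The support $\Gamma_a$ is the subgraph formed by the edges of this 1-cycle and their endpoints. Elements $x,y$ are independent if $x\le x+y$; an atom is a nonzero $x$ whose only predecessors are $0,x$; a tile is a nonzero $x$ such that any two distinct atoms $\le x$ are independent. Geometric tiles are defined recursively: a geometric tile of weight 1 is a graph homeomorphic to a circle; a geometric tile of weight $n+1$ ($n\ge1$) is either a wedge (identification of one vertex of one graph with one vertex of the other) of a geometric tile of weight $n$ and a geometric tile of weight 1, or a disjoint union of two geometric tiles whose weights sum to $n+1$. A geometric tile is a graph that is a geometric tile of some weight. *)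

theory Defs
  imports Main
begin

text \<open>A graph (1-dimensional CW complex) is given by a vertex set V, an edge set E,
  and an endpoint map endp assigning to each edge its (unordered) pair of endpoints,
  recorded as an ordered pair; a loop has both endpoints equal.  Subgraphs share the
  ambient endpoint map, so a (sub)graph is described by a pair of sets (V, E).\<close>

definition graph_wf :: "('e \<Rightarrow> 'v \<times> 'v) \<Rightarrow> 'v set \<Rightarrow> 'e set \<Rightarrow> bool" where
  "graph_wf endp V E \<longleftrightarrow> (\<forall>e\<in>E. fst (endp e) \<in> V \<and> snd (endp e) \<in> V)"

text \<open>Number of edge-ends of edges of C at v (a loop counts twice).\<close>
definition deg :: "('e \<Rightarrow> 'v \<times> 'v) \<Rightarrow> 'e set \<Rightarrow> 'v \<Rightarrow> nat" where
  "deg endp C v = card {e\<in>C. fst (endp e) = v} + card {e\<in>C. snd (endp e) = v}"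

text \<open>H_1(Gamma; Z/2): the 1-cycles, i.e. finite edge sets with every vertex of even degree.\<close>
definition H1 :: "('e \<Rightarrow> 'v \<times> 'v) \<Rightarrow> 'e set \<Rightarrow> 'e set set" where
  "H1 endp E = {C. finite C \<and> C \<subseteq> E \<and> (\<forall>v. even (deg endp C v))}"

text \<open>Addition in H_1 is symmetric difference of 1-cycles; the order is inclusion.\<close>
definition hadd :: "'e set \<Rightarrow> 'e set \<Rightarrow> 'e set" where
  "hadd x y = (x - y) \<union> (y - x)"

definition independent :: "'e set \<Rightarrow> 'e set \<Rightarrow> bool" where
  "independent x y \<longleftrightarrow> x \<subseteq> hadd x y"

definition is_atom :: "('e \<Rightarrow> 'v \<times> 'v) \<Rightarrow> 'e set \<Rightarrow> 'e set \<Rightarrow> bool" where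
  "is_atom endp E x \<longleftrightarrow> x \<in> H1 endp E \<and> x \<noteq> {} \<and>
     (\<forall>y\<in>H1 endp E. y \<subseteq> x \<longrightarrow> y = {} \<or> y = x)"

definition is_tile :: "('e \<Rightarrow> 'v \<times> 'v) \<Rightarrow> 'e set \<Rightarrow> 'e set \<Rightarrow> bool" where
  "is_tile endp E x \<longleftrightarrow> x \<in> H1 endp E \<and> x \<noteq> {} \<and>
     (\<forall>a b. is_atom endp E a \<longrightarrow> is_atom endp E b \<longrightarrow> a \<subseteq> x \<longrightarrow> b \<subseteq> x \<longrightarrow> a \<noteq> b
        \<longrightarrow> independent a b)"

definition support_verts :: "('e \<Rightarrow> 'v \<times> 'v) \<Rightarrow> 'e set \<Rightarrow> 'v set" where
  "support_verts endp a = {v. \<exists>e\<in>a. v = fst (endp e) \<or> v = snd (endp e)}"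

definition adj :: "('e \<Rightarrow> 'v \<times> 'v) \<Rightarrow> 'e set \<Rightarrow> ('v \<times> 'v) set" where
  "adj endp E = {(u, w). \<exists>e\<in>E. endp e = (u, w) \<or> endp e = (w, u)}"

definition connected_graph :: "('e \<Rightarrow> 'v \<times> 'v) \<Rightarrow> 'v set \<Rightarrow> 'e set \<Rightarrow> bool" where
  "connected_graph endp V E \<longleftrightarrow> V \<noteq> {} \<and> (\<forall>u\<in>V. \<forall>w\<in>V. (u, w) \<in> (adj endp E)\<^sup>*)"

text \<open>Graphs homeomorphic to a circle: finite connected graphs, with at least one edge,
  in which every vertex has degree 2 (cycle graphs, allowing loops and multi-edges).\<close>
definition circle_graph :: "('e \<Rightarrow> 'v \<times> 'v) \<Rightarrow> 'v set \<Rightarrow> 'e set \<Rightarrow> bool" where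
  "circle_graph endp V E \<longleftrightarrow> graph_wf endp V E \<and> finite V \<and> finite E \<and> E \<noteq> {} \<and>
     connected_graph endp V E \<and> (\<forall>v\<in>V. deg endp E v = 2)"

text \<open>A wedge of two
  graphs is realised as a union of two subgraphs with disjoint edge sets and exactly
  one common vertex; a disjoint union as a union of two vertex-disjoint subgraphs.\<close>
inductive geo_tile :: "('e \<Rightarrow> 'v \<times> 'v) \<Rightarrow> 'v set \<Rightarrow> 'e set \<Rightarrow> nat \<Rightarrow> bool"
  for endp :: "'e \<Rightarrow> 'v \<times> 'v" where
  circle: "circle_graph endp V E \<Longrightarrow> geo_tile endp V E 1"
| wedge: "\<lbrakk> n \<ge> 1; geo_tile endp V1 E1 n; geo_tile endp V2 E2 1;
            E1 \<inter> E2 = {}; \<exists>x. V1 \<inter> V2 = {x} \<rbrakk>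
          \<Longrightarrow> geo_tile endp (V1 \<union> V2) (E1 \<union> E2) (Suc n)"
| disj: "\<lbrakk> geo_tile endp V1 E1 n1; geo_tile endp V2 E2 n2; V1 \<inter> V2 = {}; E1 \<inter> E2 = {} \<rbrakk>
          \<Longrightarrow> geo_tile endp (V1 \<union> V2) (E1 \<union> E2) (n1 + n2)"

definition is_geo_tile :: "('e \<Rightarrow> 'v \<times> 'v) \<Rightarrow> 'v set \<Rightarrow> 'e set \<Rightarrow> bool" where
  "is_geo_tile endp V E \<longleftrightarrow> (\<exists>n. geo_tile endp V E n)"

end

theory Submission
  imports Defs
begin

text \<open>Atoms of the homological poset are the minimal nonempty 1-cycles, and two of
  them are independent iff they share no edge, so a tile is a nonempty cycle whose
  minimal subcycles are pairwise edge-disjoint.  A minimal cycle cannot cross a vertex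
  shared by two edge-disjoint pieces, which makes this property stable under wedges and
  disjoint unions; and in a circle the only nonempty subcycle is the whole circle.
  Conversely, let a be such a cycle.  If its support has a vertex v of degree at least
  three, the edges of a through v cannot all lie in one component of the support with v
  removed: two paths avoiding v, from the far end of one edge e to those of two others,
  would close up to two distinct minimal cycles through e.  So v splits a as a wedge of
  two smaller cycles.  If every degree is two, a is either a circle or disconnected.
  Induction on the number of edges then builds the geometric tile.\<close>

definition even_degree :: "('e \<Rightarrow> 'v \<times> 'v) \<Rightarrow> 'e set \<Rightarrow> bool" where
  "even_degree endp S \<longleftrightarrow> (\<forall>v. even (deg endp S v))"

definition minimal_cycle :: "('e \<Rightarrow> 'v \<times> 'v) \<Rightarrow> 'e set \<Rightarrow> bool" where
  "minimal_cycle endp c \<longleftrightarrow> finite c \<and> c \<noteq> {} \<and> even_degree endp c \<and>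
     (\<forall>T\<subseteq>c. even_degree endp T \<longrightarrow> T = {} \<or> T = c)"

definition minimal_cycles_disjoint :: "('e \<Rightarrow> 'v \<times> 'v) \<Rightarrow> 'e set \<Rightarrow> bool" where
  "minimal_cycles_disjoint endp A \<longleftrightarrow> (\<forall>c d. minimal_cycle endp c \<longrightarrow> minimal_cycle endp d \<longrightarrow>
     c \<subseteq> A \<longrightarrow> d \<subseteq> A \<longrightarrow> c \<noteq> d \<longrightarrow> c \<inter> d = {})"

definition ends :: "('e \<Rightarrow> 'v \<times> 'v) \<Rightarrow> 'e \<Rightarrow> 'v \<Rightarrow> nat" where
  "ends endp e w = (if fst (endp e) = w then 1 else 0) + (if snd (endp e) = w then 1 else 0)"

lemma deg_empty [simp]: "deg endp {} v = 0"
  by (simp add: deg_def)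

lemma deg_insert:
  assumes "finite A" "e \<notin> A"
  shows "deg endp (insert e A) w = deg endp A w + ends endp e w"
proof -
  have "{x\<in>insert e A. fst (endp x) = w} =
      (if fst (endp e) = w then insert e {x\<in>A. fst (endp x) = w} else {x\<in>A. fst (endp x) = w})"
    "{x\<in>insert e A. snd (endp x) = w} =
      (if snd (endp e) = w then insert e {x\<in>A. snd (endp x) = w} else {x\<in>A. snd (endp x) = w})"
    by auto
  then show ?thesis
    using assms by (simp add: deg_def ends_def)
qed

lemma deg_Un_disjoint:
  assumes "finite A" "finite B" "A \<inter> B = {}"
  shows "deg endp (A \<union> B) w = deg endp A w + deg endp B w"
proof -
  have "{x\<in>A \<union> B. fst (endp x) = w} = {x\<in>A. fst (endp x) = w} \<union> {x\<in>B. fst (endp x) = w}"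
    "{x\<in>A \<union> B. snd (endp x) = w} = {x\<in>A. snd (endp x) = w} \<union> {x\<in>B. snd (endp x) = w}"
    by auto
  then show ?thesis
    using assms by (simp add: deg_def card_Un_disjoint disjoint_iff)
qed

lemma deg_eq_0_iff:
  "finite A \<Longrightarrow> deg endp A w = 0 \<longleftrightarrow> (\<forall>e\<in>A. fst (endp e) \<noteq> w \<and> snd (endp e) \<noteq> w)"
  by (auto simp: deg_def)

lemma deg_without_loops:
  assumes "finite A" "\<forall>e\<in>A. endp e \<noteq> (v, v)"
  shows "deg endp A v = card {e\<in>A. fst (endp e) = v \<or> snd (endp e) = v}"
proof -
  have "{e\<in>A. fst (endp e) = v \<or> snd (endp e) = v} = {e\<in>A. fst (endp e) = v} \<union> {e\<in>A. snd (endp e) = v}"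
    by auto
  moreover have "{e\<in>A. fst (endp e) = v} \<inter> {e\<in>A. snd (endp e) = v} = {}"
    using assms(2) by (auto simp: prod_eq_iff)
  ultimately show ?thesis
    using assms(1) by (simp add: deg_def card_Un_disjoint)
qed

lemma ends_of_edge:
  "endp g = (z, y) \<or> endp g = (y, z) \<Longrightarrow> ends endp g w = (if w = z then 1 else 0) + (if w = y then 1 else 0)"
  by (elim disjE) (auto simp: ends_def)

lemma even_deg_hadd_singleton:
  assumes "finite J"
  shows "even (deg endp (hadd J {g}) w) \<longleftrightarrow> even (deg endp J w + ends endp g w)"
proof (cases "g \<in> J")
  case True
  then have "hadd J {g} = J - {g}" "insert g (J - {g}) = J"
    by (auto simp: hadd_def)
  then have "deg endp J w + ends endp g w = deg endp (hadd J {g}) w + 2 * ends endp g w"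
    using assms deg_insert[of "J - {g}" g endp w] by simp
  then show ?thesis
    by presburger
next
  case False
  then show ?thesis
    using assms by (simp add: hadd_def deg_insert)
qed

lemma finite_hadd: "finite A \<Longrightarrow> finite B \<Longrightarrow> finite (hadd A B)"
  by (simp add: hadd_def)

lemma support_verts_eq: "support_verts endp A = (\<lambda>e. fst (endp e)) ` A \<union> (\<lambda>e. snd (endp e)) ` A"
  unfolding support_verts_def by auto

lemma mem_support_verts_iff:
  "v \<in> support_verts endp A \<longleftrightarrow> (\<exists>e\<in>A. fst (endp e) = v \<or> snd (endp e) = v)"
  by (auto simp: support_verts_def)

lemma finite_support_verts: "finite A \<Longrightarrow> finite (support_verts endp A)"
  by (simp add: support_verts_eq)

lemma support_verts_Un: "support_verts endp (A \<union> B) = support_verts endp A \<union> support_verts endp B"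
  unfolding support_verts_def by auto

lemma sum_deg_eq_twice_card:
  "finite A \<Longrightarrow> finite X \<Longrightarrow> \<forall>e\<in>A. fst (endp e) \<in> X \<and> snd (endp e) \<in> X
    \<Longrightarrow> (\<Sum>w\<in>X. deg endp A w) = 2 * card A"
proof (induction A rule: finite_induct)
  case (insert e A)
  have "(\<Sum>w\<in>X. ends endp e w) = 2"
    using insert.prems by (simp add: ends_def sum.distrib sum.delta')
  then show ?case
    using insert by (simp add: deg_insert sum.distrib)
qed simp

lemma even_degree_if_even_off_vertex:
  assumes "finite A" and off_v: "\<And>w. w \<noteq> v \<Longrightarrow> even (deg endp A w)"
  shows "even_degree endp A"
proof -
  define X where "X = insert v (support_verts endp A)"
  have "finite X"
    using assms(1) by (simp add: X_def finite_support_verts)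
  then have "(\<Sum>w\<in>X. deg endp A w) = deg endp A v + (\<Sum>w\<in>X - {v}. deg endp A w)"
    unfolding X_def by (rule sum.remove) simp
  moreover have "(\<Sum>w\<in>X. deg endp A w) = 2 * card A"
    using assms(1) \<open>finite X\<close> by (intro sum_deg_eq_twice_card) (auto simp: X_def support_verts_def)
  moreover have "even (\<Sum>w\<in>X - {v}. deg endp A w)"
    using off_v by (intro dvd_sum) auto
  ultimately have "even (deg endp A v)"
    by (metis dvd_add_left_iff dvd_triv_left)
  then show ?thesis
    using off_v by (metis even_degree_def)
qed

lemma even_degree_diff:
  assumes "finite A" "B \<subseteq> A" "even_degree endp A" "even_degree endp B"
  shows "even_degree endp (A - B)"
proof -
  have "A = B \<union> (A - B)"
    using assms(2) by auto
  then have "deg endp A w = deg endp B w + deg endp (A - B) w" for w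
    using assms(1,2) deg_Un_disjoint[of B "A - B" endp w] by (metis Diff_disjoint finite_Diff finite_subset)
  then show ?thesis
    using assms(3,4) by (simp add: even_degree_def)
qed


subsection \<open>Atoms and tiles\<close>

lemma mem_H1_iff: "C \<in> H1 endp E \<longleftrightarrow> finite C \<and> C \<subseteq> E \<and> even_degree endp C"
  by (simp add: H1_def even_degree_def)

lemma is_atom_iff_minimal_cycle: "c \<subseteq> E \<Longrightarrow> is_atom endp E c \<longleftrightarrow> minimal_cycle endp c"
  unfolding is_atom_def minimal_cycle_def Ball_def mem_H1_iff by (meson finite_subset order_trans)

lemma independent_iff_disjoint: "independent c d \<longleftrightarrow> c \<inter> d = {}"
  unfolding independent_def hadd_def by blast

lemma is_tile_iff:
  "is_tile endp E a \<longleftrightarrow> a \<in> H1 endp E \<and> a \<noteq> {} \<and> minimal_cycles_disjoint endp a"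
proof (cases "a \<in> H1 endp E")
  case True
  then have "c \<subseteq> a \<Longrightarrow> is_atom endp E c \<longleftrightarrow> minimal_cycle endp c" for c
    by (meson is_atom_iff_minimal_cycle mem_H1_iff order_trans)
  then show ?thesis
    unfolding is_tile_def minimal_cycles_disjoint_def independent_iff_disjoint by blast
qed (simp add: is_tile_def)

lemma minimal_cycles_disjoint_subset:
  "minimal_cycles_disjoint endp B \<Longrightarrow> A \<subseteq> B \<Longrightarrow> minimal_cycles_disjoint endp A"
  unfolding minimal_cycles_disjoint_def by blast

lemma minimal_cycle_through:
  "finite D \<Longrightarrow> even_degree endp D \<Longrightarrow> e \<in> D \<Longrightarrow> \<exists>c\<subseteq>D. minimal_cycle endp c \<and> e \<in> c"
proof (induction D rule: finite_psubset_induct)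
  case (psubset D)
  show ?case
  proof (cases "minimal_cycle endp D")
    case True
    with psubset.prems(2) show ?thesis
      by blast
  next
    case False
    then obtain T where T: "T \<subseteq> D" "even_degree endp T" "T \<noteq> {}" "T \<noteq> D"
      using psubset.prems(1) psubset.hyps \<open>e \<in> D\<close> unfolding minimal_cycle_def by blast
    have "even_degree endp (D - T)"
      by (rule even_degree_diff[OF psubset.hyps T(1) psubset.prems(1) T(2)])
    show ?thesis
    proof (cases "e \<in> T")
      case True
      have "finite T"
        using T(1) psubset.hyps by (rule finite_subset)
      then obtain c where "c \<subseteq> T" "minimal_cycle endp c" "e \<in> c"
        using psubset.IH[of T] T True by auto
      then show ?thesis
        using T(1) by blast
    next
      case False
      have "D - T \<subset> D"
        using T(1,3) by blast
      then obtain c where "c \<subseteq> D - T" "minimal_cycle endp c" "e \<in> c"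
        using psubset.IH[of "D - T"] \<open>even_degree endp (D - T)\<close> False psubset.prems(2) by auto
      then show ?thesis
        by blast
    qed
  qed
qed

subsection \<open>Geometric tiles have edge-disjoint minimal cycles\<close>

lemma geo_tile_wf_nonempty:
  "geo_tile endp V E n \<Longrightarrow> graph_wf endp V E \<and> finite E \<and> E \<noteq> {} \<and> n \<ge> 1"
  by (induction rule: geo_tile.induct) (auto simp: circle_graph_def graph_wf_def)

text \<open>Where the whole graph has degree 2, a nonempty even subgraph has degree 2 as well, so
  it already contains every edge there.\<close>

lemma even_subset_contains_edges_at:
  assumes "finite E" "deg endp E v = 2" "S \<subseteq> E" "even_degree endp S"
    and "e0 \<in> S" "fst (endp e0) = v \<or> snd (endp e0) = v"
    and "e \<in> E" "fst (endp e) = v \<or> snd (endp e) = v"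
  shows "e \<in> S"
proof -
  have "finite S"
    using assms(3,1) by (rule finite_subset)
  have split: "deg endp E v = deg endp S v + deg endp (E - S) v"
    using deg_Un_disjoint[of S "E - S" endp v] assms(1,3) \<open>finite S\<close> by (simp add: Un_absorb1)
  have "deg endp S v \<noteq> 0"
    using \<open>finite S\<close> assms(5,6) by (auto simp: deg_eq_0_iff)
  moreover have "even (deg endp S v)"
    using assms(4) by (simp add: even_degree_def)
  ultimately have "deg endp (E - S) v = 0"
    using split assms(2) by (elim evenE) arith
  then show ?thesis
    using assms(1,7,8) by (auto simp: deg_eq_0_iff)
qed

lemma circle_graph_even_subset:
  assumes circ: "circle_graph endp V E" and S: "S \<subseteq> E" "even_degree endp S" "S \<noteq> {}"
  shows "S = E"
proof -
  have wf: "graph_wf endp V E" and "finite E" and con: "connected_graph endp V E"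
    and deg2: "\<And>v. v \<in> V \<Longrightarrow> deg endp E v = 2"
    using circ unfolding circle_graph_def by auto
  define T where "T = {v\<in>V. \<exists>e\<in>S. fst (endp e) = v \<or> snd (endp e) = v}"
  have edges_at_T: "e \<in> S" if "v \<in> T" "e \<in> E" "fst (endp e) = v \<or> snd (endp e) = v" for v e
  proof -
    obtain e0 where "e0 \<in> S" "fst (endp e0) = v \<or> snd (endp e0) = v" "v \<in> V"
      using \<open>v \<in> T\<close> unfolding T_def by blast
    then show ?thesis
      using even_subset_contains_edges_at[OF \<open>finite E\<close> deg2 S(1,2)] that(2,3) by blast
  qed
  have reach_T: "w \<in> T" if "(u, w) \<in> (adj endp E)\<^sup>*" "u \<in> T" for u w
    using that
  proof (induction rule: rtrancl_induct)
    case (step y z)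
    then obtain g where g: "g \<in> E" "endp g = (y, z) \<or> endp g = (z, y)"
      unfolding adj_def by auto
    then have "g \<in> S"
      using edges_at_T[OF step.IH[OF step.prems]] by auto
    moreover have "z \<in> V"
      using g wf unfolding graph_wf_def by (metis fst_conv snd_conv)
    ultimately show ?case
      using g unfolding T_def by force
  qed
  obtain e0 where "e0 \<in> S"
    using S(3) by blast
  then have "fst (endp e0) \<in> T"
    using S(1) wf unfolding T_def graph_wf_def by blast
  then have "v \<in> T" if "v \<in> V" for v
    using con that reach_T \<open>fst (endp e0) \<in> T\<close> unfolding connected_graph_def T_def by blast
  then have "e \<in> S" if "e \<in> E" for e
    using that edges_at_T[of "fst (endp e)" e] wf unfolding graph_wf_def by blast
  then show ?thesis
    using S(1) by blast
qed

text \<open>The part of c in the first piece has even degree away from x, hence everywhere.\<close>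

lemma minimal_cycle_in_one_piece:
  assumes wf1: "graph_wf endp V1 E1" and wf2: "graph_wf endp V2 E2"
    and "E1 \<inter> E2 = {}" and "V1 \<inter> V2 \<subseteq> {x}"
    and c: "minimal_cycle endp c" "c \<subseteq> E1 \<union> E2"
  shows "c \<subseteq> E1 \<or> c \<subseteq> E2"
proof -
  have "finite c" and "even_degree endp c"
    using c(1) unfolding minimal_cycle_def by auto
  have "even (deg endp (c \<inter> E1) w)" if "w \<noteq> x" for w
  proof (cases "w \<in> V1")
    case True
    then have "w \<notin> V2"
      using assms(4) that by auto
    then have "{e\<in>c \<inter> E1. fst (endp e) = w} = {e\<in>c. fst (endp e) = w}"
      "{e\<in>c \<inter> E1. snd (endp e) = w} = {e\<in>c. snd (endp e) = w}"
      using c(2) wf2 unfolding graph_wf_def by auto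
    then show ?thesis
      using \<open>even_degree endp c\<close> by (simp add: deg_def even_degree_def)
  next
    case False
    then have "deg endp (c \<inter> E1) w = 0"
      using wf1 \<open>finite c\<close> by (auto simp: deg_eq_0_iff graph_wf_def)
    then show ?thesis
      by simp
  qed
  then have "even_degree endp (c \<inter> E1)"
    using \<open>finite c\<close> by (intro even_degree_if_even_off_vertex) auto
  then have "c \<inter> E1 = {} \<or> c \<inter> E1 = c"
    using c(1) unfolding minimal_cycle_def by blast
  then show ?thesis
    using c(2) by blast
qed

lemma minimal_cycles_disjoint_Un:
  assumes "graph_wf endp V1 E1" "graph_wf endp V2 E2" "E1 \<inter> E2 = {}" "V1 \<inter> V2 \<subseteq> {x}"
    and "minimal_cycles_disjoint endp E1" "minimal_cycles_disjoint endp E2"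
  shows "minimal_cycles_disjoint endp (E1 \<union> E2)"
  unfolding minimal_cycles_disjoint_def
proof (intro allI impI)
  fix c d
  assume cd: "minimal_cycle endp c" "minimal_cycle endp d" "c \<subseteq> E1 \<union> E2" "d \<subseteq> E1 \<union> E2" "c \<noteq> d"
  have "c \<subseteq> E1 \<or> c \<subseteq> E2" "d \<subseteq> E1 \<or> d \<subseteq> E2"
    using minimal_cycle_in_one_piece[OF assms(1-4)] cd by blast+
  then show "c \<inter> d = {}"
    using assms(3,5,6) cd unfolding minimal_cycles_disjoint_def by blast
qed

lemma geo_tile_minimal_cycles_disjoint: "geo_tile endp V E n \<Longrightarrow> minimal_cycles_disjoint endp E"
proof (induction rule: geo_tile.induct)
  case (circle V E)
  then show ?case
    using circle_graph_even_subset
    unfolding minimal_cycles_disjoint_def minimal_cycle_def by metis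
next
  case (wedge n V1 E1 V2 E2)
  then obtain x where "V1 \<inter> V2 = {x}"
    by auto
  with wedge show ?case
    using minimal_cycles_disjoint_Un[of endp V1 E1 V2 E2 x] geo_tile_wf_nonempty by blast
next
  case (disj V1 E1 n1 V2 E2 n2)
  then show ?case
    using minimal_cycles_disjoint_Un[of endp V1 E1 V2 E2 undefined] geo_tile_wf_nonempty by blast
qed

subsection \<open>Edge-disjoint minimal cycles make a geometric tile\<close>

text \<open>Gluing two geometric tiles at no more than one vertex gives a geometric tile: the
  second tile is attached circle by circle, and each circle meets the growing union in
  at most one vertex.\<close>

lemma geo_tile_glue:
  "geo_tile endp V2 E2 n2 \<Longrightarrow> geo_tile endp V1 E1 n1 \<Longrightarrow> E1 \<inter> E2 = {} \<Longrightarrow> V1 \<inter> V2 \<subseteq> {x}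
    \<Longrightarrow> is_geo_tile endp (V1 \<union> V2) (E1 \<union> E2)"
proof (induction arbitrary: V1 E1 n1 x rule: geo_tile.induct)
  case (circle V E)
  have "geo_tile endp V E 1"
    using circle(1) by (rule geo_tile.circle)
  show ?case
  proof (cases "V1 \<inter> V = {}")
    case True
    then show ?thesis
      using geo_tile.disj[OF circle(2) \<open>geo_tile endp V E 1\<close> True circle(3)]
      unfolding is_geo_tile_def by blast
  next
    case False
    then have "V1 \<inter> V = {x}"
      using circle(4) by blast
    moreover have "n1 \<ge> 1"
      using geo_tile_wf_nonempty[OF circle(2)] by simp
    ultimately show ?thesis
      using geo_tile.wedge[OF _ circle(2) \<open>geo_tile endp V E 1\<close> circle(3)]
      unfolding is_geo_tile_def by blast
  qed
next
  case (wedge n W F C D)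
  obtain y where y: "W \<inter> C = {y}"
    using wedge.hyps(5) by blast
  show ?case
  proof (cases "x \<in> C \<and> x \<noteq> y")
    case True
    obtain m where "geo_tile endp (V1 \<union> C) (E1 \<union> D) m"
      using wedge.IH(2)[of V1 E1 n1 x] wedge.prems unfolding is_geo_tile_def by blast
    moreover have "(V1 \<union> C) \<inter> W \<subseteq> {y}" "(E1 \<union> D) \<inter> F = {}"
      using wedge.prems(2,3) wedge.hyps(4) True y by blast+
    ultimately have "is_geo_tile endp ((V1 \<union> C) \<union> W) ((E1 \<union> D) \<union> F)"
      using wedge.IH(1) by blast
    then show ?thesis
      by (simp add: Un_ac)
  next
    case False
    obtain m where "geo_tile endp (V1 \<union> W) (E1 \<union> F) m"
      using wedge.IH(1)[of V1 E1 n1 x] wedge.prems unfolding is_geo_tile_def by blast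
    moreover have "(V1 \<union> W) \<inter> C \<subseteq> {y}" "(E1 \<union> F) \<inter> D = {}"
      using wedge.prems(2,3) wedge.hyps(4) False y by blast+
    ultimately have "is_geo_tile endp ((V1 \<union> W) \<union> C) ((E1 \<union> F) \<union> D)"
      using wedge.IH(2) by blast
    then show ?thesis
      by (simp add: Un_ac)
  qed
next
  case (disj W1 F1 m1 W2 F2 m2)
  obtain m where "geo_tile endp (V1 \<union> W1) (E1 \<union> F1) m"
    using disj.IH(1)[of V1 E1 n1 x] disj.prems unfolding is_geo_tile_def by blast
  moreover have "(V1 \<union> W1) \<inter> W2 \<subseteq> {x}" "(E1 \<union> F1) \<inter> F2 = {}"
    using disj.prems(2,3) disj.hyps(3,4) by blast+
  ultimately have "is_geo_tile endp ((V1 \<union> W1) \<union> W2) ((E1 \<union> F1) \<union> F2)"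
    using disj.IH(2) by blast
  then show ?case
    by (simp add: Un_ac)
qed

lemma odd_degree_path_edges:
  "(x, y) \<in> (adj endp A)\<^sup>* \<Longrightarrow>
    \<exists>J. finite J \<and> J \<subseteq> A \<and> (\<forall>w. odd (deg endp J w) \<longleftrightarrow> (w = x) \<noteq> (w = y))"
proof (induction rule: rtrancl_induct)
  case base
  show ?case
    by (intro exI[of _ "{}"]) simp
next
  case (step z y)
  obtain J where J: "finite J" "J \<subseteq> A" "\<forall>w. odd (deg endp J w) \<longleftrightarrow> (w = x) \<noteq> (w = z)"
    using step.IH by blast
  obtain g where g: "g \<in> A" "endp g = (z, y) \<or> endp g = (y, z)"
    using step.hyps(2) unfolding adj_def by auto
  have "odd (deg endp (hadd J {g}) w) \<longleftrightarrow> (w = x) \<noteq> (w = y)" for w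
    using spec[OF J(3), of w] even_deg_hadd_singleton[OF J(1), of endp g w] ends_of_edge[of endp g z y w, OF g(2)]
    by (cases "w = z"; cases "w = y"; cases "w = x") simp_all
  moreover have "hadd J {g} \<subseteq> A"
    using J(2) g(1) by (auto simp: hadd_def)
  moreover have "finite (hadd J {g})"
    using J(1) by (simp add: finite_hadd)
  ultimately show ?case
    by blast
qed

definition avoiding_edges :: "('e \<Rightarrow> 'v \<times> 'v) \<Rightarrow> 'e set \<Rightarrow> 'v set \<Rightarrow> 'e set" where
  "avoiding_edges endp a W = {e\<in>a. fst (endp e) \<notin> W \<and> snd (endp e) \<notin> W}"

text \<open>For W = {v} these are the edges of the component containing x of the graph obtained
  by cutting a open at v (each edge at v keeps its own copy of v); for W = {} they form the
  connected component of x.\<close>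

definition component_edges :: "('e \<Rightarrow> 'v \<times> 'v) \<Rightarrow> 'e set \<Rightarrow> 'v set \<Rightarrow> 'v \<Rightarrow> 'e set" where
  "component_edges endp a W x = {e\<in>a. \<exists>y. y \<notin> W \<and> (fst (endp e) = y \<or> snd (endp e) = y) \<and>
     (x, y) \<in> (adj endp (avoiding_edges endp a W))\<^sup>*}"

lemma component_edges_subset: "component_edges endp a W x \<subseteq> a"
  by (auto simp: component_edges_def)

lemma mem_component_edges_iff:
  assumes "y \<notin> W" "e \<in> a" "fst (endp e) = y \<or> snd (endp e) = y"
  shows "e \<in> component_edges endp a W x \<longleftrightarrow> (x, y) \<in> (adj endp (avoiding_edges endp a W))\<^sup>*"
proof
  assume "e \<in> component_edges endp a W x"
  then obtain y' where y': "y' \<notin> W" "fst (endp e) = y' \<or> snd (endp e) = y'"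
    "(x, y') \<in> (adj endp (avoiding_edges endp a W))\<^sup>*"
    unfolding component_edges_def by blast
  show "(x, y) \<in> (adj endp (avoiding_edges endp a W))\<^sup>*"
  proof (cases "y' = y")
    case False
    then have "endp e = (y', y) \<or> endp e = (y, y')"
      using assms(3) y'(2) by (auto simp: prod_eq_iff)
    moreover have "e \<in> avoiding_edges endp a W"
      using assms y' False by (auto simp: avoiding_edges_def)
    ultimately have "(y', y) \<in> adj endp (avoiding_edges endp a W)"
      unfolding adj_def by blast
    with y'(3) show ?thesis
      by (rule rtrancl_into_rtrancl)
  qed (use y'(3) in simp)
qed (use assms in \<open>auto simp: component_edges_def\<close>)

lemma deg_component_edges:
  assumes "y \<notin> W"
  shows "deg endp (component_edges endp a W x) y =
    (if (x, y) \<in> (adj endp (avoiding_edges endp a W))\<^sup>* then deg endp a y else 0)"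
proof -
  let ?K = "component_edges endp a W x"
  have "e \<in> ?K \<longleftrightarrow> e \<in> a \<and> (x, y) \<in> (adj endp (avoiding_edges endp a W))\<^sup>*"
    if "fst (endp e) = y \<or> snd (endp e) = y" for e
    using mem_component_edges_iff[of y W e a endp x] assms that component_edges_subset[of endp a W x]
    by blast
  then have "{e\<in>?K. fst (endp e) = y} =
      (if (x, y) \<in> (adj endp (avoiding_edges endp a W))\<^sup>* then {e\<in>a. fst (endp e) = y} else {})"
    "{e\<in>?K. snd (endp e) = y} =
      (if (x, y) \<in> (adj endp (avoiding_edges endp a W))\<^sup>* then {e\<in>a. snd (endp e) = y} else {})"
    by auto
  then show ?thesis
    by (simp add: deg_def)
qed

lemma support_component_edges_inter:
  "support_verts endp (component_edges endp a W x) \<inter> support_verts endp (a - component_edges endp a W x) \<subseteq> W"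
proof
  fix y
  let ?K = "component_edges endp a W x"
  assume "y \<in> support_verts endp ?K \<inter> support_verts endp (a - ?K)"
  then obtain e f where e: "e \<in> ?K" "fst (endp e) = y \<or> snd (endp e) = y"
    and f: "f \<in> a" "f \<notin> ?K" "fst (endp f) = y \<or> snd (endp f) = y"
    unfolding Int_iff mem_support_verts_iff by blast
  have "e \<in> a"
    using component_edges_subset e(1) by (rule subsetD)
  show "y \<in> W"
  proof (rule ccontr)
    assume "y \<notin> W"
    from mem_component_edges_iff[of y W e a endp x, OF this \<open>e \<in> a\<close> e(2)]
      mem_component_edges_iff[of y W f a endp x, OF this f(1) f(3)]
    show False
      using e(1) f(2) by simp
  qed
qed

lemma even_degree_component_edges:
  assumes "finite a" "even_degree endp a" "W \<subseteq> {v}"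
  shows "even_degree endp (component_edges endp a W x)"
proof (rule even_degree_if_even_off_vertex)
  show "finite (component_edges endp a W x)"
    using component_edges_subset assms(1) by (rule finite_subset)
  fix w
  assume "w \<noteq> v"
  with assms(3) have "w \<notin> W"
    by blast
  then show "even (deg endp (component_edges endp a W x) w)"
    using assms(2) by (simp add: deg_component_edges even_degree_def)
qed

text \<open>The path from x to y avoiding v closes up with e and f to an even subgraph. A
  minimal cycle through e inside it has even degree at v, so it must also use f, the only
  other edge of the subgraph at v.\<close>

lemma minimal_cycle_through_two_edges:
  assumes "e \<in> a" "f \<in> a" "e \<noteq> f"
    and e: "endp e = (v, x) \<or> endp e = (x, v)" "x \<noteq> v"
    and f: "endp f = (v, y) \<or> endp f = (y, v)" "y \<noteq> v"
    and path: "(x, y) \<in> (adj endp (avoiding_edges endp a {v}))\<^sup>*"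
  shows "\<exists>d. minimal_cycle endp d \<and> d \<subseteq> insert e (insert f (avoiding_edges endp a {v})) \<and> e \<in> d \<and> f \<in> d"
proof -
  let ?A = "avoiding_edges endp a {v}"
  obtain J where J: "finite J" "J \<subseteq> ?A" "\<forall>w. odd (deg endp J w) \<longleftrightarrow> (w = x) \<noteq> (w = y)"
    using odd_degree_path_edges[OF path] by blast
  have "e \<notin> ?A" "f \<notin> ?A"
    using e f by (auto simp: avoiding_edges_def)
  define D where "D = insert e (insert f J)"
  have "finite D" "D \<subseteq> insert e (insert f ?A)"
    using J(1,2) by (auto simp: D_def)
  have "f \<notin> J" "e \<notin> insert f J"
    using J(2) \<open>e \<notin> ?A\<close> \<open>f \<notin> ?A\<close> \<open>e \<noteq> f\<close> by auto
  then have deg_D: "deg endp D w = deg endp J w + ends endp f w + ends endp e w" for w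
    using J(1) by (simp add: D_def deg_insert)
  have "even_degree endp D"
    unfolding even_degree_def
  proof
    fix w
    show "even (deg endp D w)"
      using spec[OF J(3), of w] ends_of_edge[of endp e v x w, OF e(1)] ends_of_edge[of endp f v y w, OF f(1)]
      unfolding deg_D by (cases "w = v"; cases "w = x"; cases "w = y") simp_all
  qed
  then obtain d where d: "d \<subseteq> D" "minimal_cycle endp d" "e \<in> d"
    using minimal_cycle_through[OF \<open>finite D\<close>, of endp e] by (auto simp: D_def)
  have "f \<in> d"
  proof (rule ccontr)
    assume "f \<notin> d"
    then have "d - {e} \<subseteq> J"
      using d(1) by (auto simp: D_def)
    moreover have "finite (d - {e})"
      using d(1) \<open>finite D\<close> by (auto dest: finite_subset)
    ultimately have "deg endp (d - {e}) v = 0"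
      using J(2) by (auto simp: deg_eq_0_iff avoiding_edges_def)
    moreover have "deg endp d v = deg endp (d - {e}) v + ends endp e v"
      using deg_insert[OF \<open>finite (d - {e})\<close>, of e endp v] d(3) by (simp add: insert_absorb)
    moreover have "ends endp e v = 1"
      using ends_of_edge[of endp e v x v, OF e(1)] e(2) by simp
    ultimately have "deg endp d v = 1"
      by simp
    with d(2) show False
      unfolding minimal_cycle_def even_degree_def by (metis odd_one)
  qed
  with d \<open>D \<subseteq> insert e (insert f ?A)\<close> show ?thesis
    by blast
qed

definition one_point_split :: "('e \<Rightarrow> 'v \<times> 'v) \<Rightarrow> 'e set \<Rightarrow> 'e set \<Rightarrow> bool" where
  "one_point_split endp a K \<longleftrightarrow> K \<subseteq> a \<and> K \<noteq> {} \<and> a - K \<noteq> {} \<and> even_degree endp K \<and>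
     (\<exists>x. support_verts endp K \<inter> support_verts endp (a - K) \<subseteq> {x})"

lemma deg_loop: "endp l = (v, v) \<Longrightarrow> deg endp {l} w = (if w = v then 2 else 0)"
  using deg_insert[of "{}" l endp w] by (simp add: ends_def)

lemma loop_one_point_split:
  assumes "l \<in> a" "endp l = (v, v)" "a \<noteq> {l}"
  shows "one_point_split endp a {l}"
proof -
  have "support_verts endp {l} \<inter> support_verts endp (a - {l}) \<subseteq> {v}"
    using assms(2) by (auto simp: support_verts_def)
  moreover have "even_degree endp {l}"
    using assms(2) by (simp add: even_degree_def deg_loop)
  ultimately show ?thesis
    using assms(1,3) unfolding one_point_split_def by blast
qed

lemma other_endpoint:
  "fst (endp e) = v \<or> snd (endp e) = v \<Longrightarrow> endp e \<noteq> (v, v) \<Longrightarrow>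
    \<exists>y. y \<noteq> v \<and> (endp e = (v, y) \<or> endp e = (y, v))"
  by (cases "endp e") auto

text \<open>Three edges e, f, g at a cut vertex v: if f and g were in the component of e after
  cutting at v, there would be distinct minimal cycles through e and f and through e and g.\<close>

lemma cut_vertex_one_point_split:
  assumes "finite a" "even_degree endp a" and disj: "minimal_cycles_disjoint endp a"
    and no_loop: "\<forall>e\<in>a. endp e \<noteq> (v, v)" and "3 \<le> deg endp a v"
  shows "\<exists>K. one_point_split endp a K"
proof -
  let ?Ev = "{e\<in>a. fst (endp e) = v \<or> snd (endp e) = v}"
  let ?A = "avoiding_edges endp a {v}"
  have "3 \<le> card ?Ev"
    using assms(5) deg_without_loops[OF assms(1) no_loop] by simp
  then obtain T where "T \<subseteq> ?Ev" "card T = 3"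
    by (meson obtain_subset_with_card_n)
  then obtain e f g where Ev: "e \<in> ?Ev" "f \<in> ?Ev" "g \<in> ?Ev"
    and efg_distinct: "e \<noteq> f" "e \<noteq> g" "f \<noteq> g"
    by (auto simp: card_3_iff)
  have efg: "e \<in> a" "f \<in> a" "g \<in> a"
    using Ev by auto
  have other: "\<exists>y. y \<noteq> v \<and> (endp h = (v, y) \<or> endp h = (y, v))" if "h \<in> ?Ev" for h
    using other_endpoint[of endp h v] that no_loop by blast
  obtain x where x: "x \<noteq> v" "endp e = (v, x) \<or> endp e = (x, v)"
    using other[OF Ev(1)] by blast
  obtain y where y: "y \<noteq> v" "endp f = (v, y) \<or> endp f = (y, v)"
    using other[OF Ev(2)] by blast
  obtain z where z: "z \<noteq> v" "endp g = (v, z) \<or> endp g = (z, v)"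
    using other[OF Ev(3)] by blast
  let ?K = "component_edges endp a {v} x"
  have "e \<in> ?K"
    using mem_component_edges_iff[of x "{v}" e a endp x] efg(1) x by auto
  have "a - ?K \<noteq> {}"
  proof
    assume "a - ?K = {}"
    then have "(x, y) \<in> (adj endp ?A)\<^sup>*" "(x, z) \<in> (adj endp ?A)\<^sup>*"
      using mem_component_edges_iff[of y "{v}" f a endp x] mem_component_edges_iff[of z "{v}" g a endp x]
        efg y z by auto
    then obtain df dg where
      df: "minimal_cycle endp df" "df \<subseteq> insert e (insert f ?A)" "e \<in> df" "f \<in> df" and
      dg: "minimal_cycle endp dg" "dg \<subseteq> insert e (insert g ?A)" "e \<in> dg" "g \<in> dg"
      using minimal_cycle_through_two_edges[OF efg(1,2) efg_distinct(1) x(2,1) y(2,1)]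
        minimal_cycle_through_two_edges[OF efg(1,3) efg_distinct(2) x(2,1) z(2,1)] by blast
    have "g \<notin> insert e (insert f ?A)"
      using efg_distinct z by (auto simp: avoiding_edges_def)
    then have "df \<noteq> dg"
      using df(2) dg(4) by blast
    moreover have "df \<subseteq> a" "dg \<subseteq> a"
      using df(2) dg(2) efg by (auto simp: avoiding_edges_def)
    ultimately have "df \<inter> dg = {}"
      using disj df(1) dg(1) unfolding minimal_cycles_disjoint_def by blast
    with df(3) dg(3) show False
      by blast
  qed
  moreover have "even_degree endp ?K"
    using assms(1,2) by (rule even_degree_component_edges) simp
  ultimately have "one_point_split endp a ?K"
    using \<open>e \<in> ?K\<close> component_edges_subset[of endp a "{v}" x]
      support_component_edges_inter[of endp a "{v}" x]
    unfolding one_point_split_def by blast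
  then show ?thesis ..
qed

lemma converse_adj: "(adj endp A)\<inverse> = adj endp A"
  unfolding adj_def by auto

lemma graph_wf_support_verts: "graph_wf endp (support_verts endp a) a"
  by (auto simp: graph_wf_def support_verts_def)

lemma max_degree_two_circle_or_split:
  assumes "finite a" "even_degree endp a" "a \<noteq> {}" and deg_le: "\<forall>w. deg endp a w \<le> 2"
  shows "circle_graph endp (support_verts endp a) a \<or> (\<exists>K. one_point_split endp a K)"
proof -
  obtain e0 where "e0 \<in> a"
    using assms(3) by blast
  define x where "x = fst (endp e0)"
  let ?K = "component_edges endp a {} x"
  have "avoiding_edges endp a {} = a"
    by (simp add: avoiding_edges_def)
  then have in_K: "e \<in> ?K \<longleftrightarrow> (x, y) \<in> (adj endp a)\<^sup>*"
    if "e \<in> a" "fst (endp e) = y \<or> snd (endp e) = y" for e y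
    using mem_component_edges_iff[of y "{}" e a endp x] that by simp
  have "e0 \<in> ?K"
    using in_K[OF \<open>e0 \<in> a\<close>, of x] by (simp add: x_def)
  show ?thesis
  proof (cases "?K = a")
    case False
    have "even_degree endp ?K"
      using assms(1,2) by (rule even_degree_component_edges) simp
    then have "one_point_split endp a ?K"
      using False \<open>e0 \<in> ?K\<close> component_edges_subset[of endp a "{}" x]
        support_component_edges_inter[of endp a "{}" x]
      unfolding one_point_split_def by blast
    then show ?thesis
      by blast
  next
    case True
    have reach: "(x, u) \<in> (adj endp a)\<^sup>*" if u: "u \<in> support_verts endp a" for u
    proof -
      obtain e where "e \<in> a" "fst (endp e) = u \<or> snd (endp e) = u"
        using u unfolding mem_support_verts_iff by blast
      with in_K show ?thesis
        using True by blast
    qed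
    have "connected_graph endp (support_verts endp a) a"
      unfolding connected_graph_def
    proof (intro conjI ballI)
      have "x \<in> support_verts endp a"
        using \<open>e0 \<in> a\<close> unfolding mem_support_verts_iff x_def by blast
      then show "support_verts endp a \<noteq> {}"
        by blast
      fix u w
      assume "u \<in> support_verts endp a" "w \<in> support_verts endp a"
      have "(u, x) \<in> (adj endp a)\<^sup>*"
        using rtrancl_converseI[OF reach[OF \<open>u \<in> support_verts endp a\<close>]] by (simp add: converse_adj)
      then show "(u, w) \<in> (adj endp a)\<^sup>*"
        using reach[OF \<open>w \<in> support_verts endp a\<close>] by (rule rtrancl_trans)
    qed
    moreover have deg2: "deg endp a w = 2" if "w \<in> support_verts endp a" for w
    proof -
      have "deg endp a w \<noteq> 0"
        using that assms(1) by (auto simp: deg_eq_0_iff mem_support_verts_iff)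
      moreover have "even (deg endp a w)"
        using assms(2) by (simp add: even_degree_def)
      ultimately show ?thesis
        using spec[OF deg_le, of w] by (elim evenE) arith
    qed
    ultimately have "circle_graph endp (support_verts endp a) a"
      using assms(1,3) graph_wf_support_verts[of endp a] finite_support_verts[OF assms(1)]
      unfolding circle_graph_def by simp
    then show ?thesis
      by blast
  qed
qed

lemma circle_or_one_point_split:
  assumes "finite a" "even_degree endp a" "a \<noteq> {}" "minimal_cycles_disjoint endp a"
  shows "circle_graph endp (support_verts endp a) a \<or> (\<exists>K. one_point_split endp a K)"
proof (cases "\<exists>v. 3 \<le> deg endp a v")
  case True
  then obtain v where v: "3 \<le> deg endp a v"
    by blast
  show ?thesis
  proof (cases "\<exists>l\<in>a. endp l = (v, v)")
    case True
    then obtain l where "l \<in> a" "endp l = (v, v)"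
      by blast
    moreover have "a \<noteq> {l}"
      using v deg_loop[of endp l v v] \<open>endp l = (v, v)\<close> by auto
    ultimately have "one_point_split endp a {l}"
      by (rule loop_one_point_split)
    then show ?thesis
      by blast
  next
    case False
    then have "\<forall>e\<in>a. endp e \<noteq> (v, v)"
      by blast
    then show ?thesis
      using cut_vertex_one_point_split[OF assms(1,2,4) _ v] by simp
  qed
next
  case False
  then have "\<forall>w. deg endp a w \<le> 2"
    by (simp add: not_le less_Suc_eq_le numeral_3_eq_3 numeral_2_eq_2)
  then show ?thesis
    by (rule max_degree_two_circle_or_split[OF assms(1-3)])
qed

lemma geo_tile_if_minimal_cycles_disjoint:
  "finite a \<Longrightarrow> even_degree endp a \<Longrightarrow> a \<noteq> {} \<Longrightarrow> minimal_cycles_disjoint endp a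
    \<Longrightarrow> is_geo_tile endp (support_verts endp a) a"
proof (induction "card a" arbitrary: a rule: less_induct)
  case less
  from circle_or_one_point_split[OF less.prems] show ?case
  proof
    assume "circle_graph endp (support_verts endp a) a"
    then show ?thesis
      unfolding is_geo_tile_def by (blast intro: geo_tile.circle)
  next
    assume "\<exists>K. one_point_split endp a K"
    then obtain K x where K: "K \<subseteq> a" "K \<noteq> {}" "a - K \<noteq> {}" "even_degree endp K"
      and glued: "support_verts endp K \<inter> support_verts endp (a - K) \<subseteq> {x}"
      unfolding one_point_split_def by blast
    have IH: "is_geo_tile endp (support_verts endp b) b"
      if "b \<subseteq> a" "b \<noteq> {}" "b \<noteq> a" "even_degree endp b" for b
    proof (rule less.hyps)
      show "card b < card a"
        using that(1,3) less.prems(1) by (simp add: psubset_card_mono)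
      show "finite b"
        using that(1) less.prems(1) by (rule finite_subset)
      show "minimal_cycles_disjoint endp b"
        using less.prems(4) that(1) by (rule minimal_cycles_disjoint_subset)
    qed (use that in auto)
    have "even_degree endp (a - K)"
      using even_degree_diff[OF less.prems(1) K(1) less.prems(2) K(4)] .
    then obtain n m where
      tiles: "geo_tile endp (support_verts endp K) K n" "geo_tile endp (support_verts endp (a - K)) (a - K) m"
      using IH[of K] IH[of "a - K"] K unfolding is_geo_tile_def by blast
    have "is_geo_tile endp (support_verts endp K \<union> support_verts endp (a - K)) (K \<union> (a - K))"
      by (rule geo_tile_glue[OF tiles(2,1) _ glued]) blast
    then show ?thesis
      using K(1) by (simp add: support_verts_Un[symmetric] Un_absorb1)
  qed
qed

lemma is_geo_tile_support_iff:
  assumes "finite a" "even_degree endp a"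
  shows "is_geo_tile endp (support_verts endp a) a \<longleftrightarrow> a \<noteq> {} \<and> minimal_cycles_disjoint endp a"
  using assms geo_tile_if_minimal_cycles_disjoint geo_tile_wf_nonempty geo_tile_minimal_cycles_disjoint
  unfolding is_geo_tile_def by metis

theorem theorem12p3:
  fixes endp :: "'e \<Rightarrow> 'v \<times> 'v" and V :: "'v set" and E :: "'e set" and a :: "'e set"
  assumes "graph_wf endp V E"
    and "a \<in> H1 endp E"
  shows "is_tile endp E a \<longleftrightarrow> is_geo_tile endp (support_verts endp a) a"
proof -
  have "finite a" "even_degree endp a"
    using assms(2) by (simp_all add: mem_H1_iff)
  then show ?thesis
    using assms(2) by (simp add: is_tile_iff is_geo_tile_support_iff)
qed

end
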